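(* Let $x$ be a non-negative integer, $w$ a positive integer, and let $N_c$ be the least period of the sequence $(T_n^i(x)\bmod p^w)_{i\ge0}$. If $N_c\ge p^2$, then for every integer $k\ge w$ the least period of the sequence $(T_n^i(x)\bmod p^k)_{i\ge0}$ equals $N_c\cdot p^{k-w}$.
   Context: $p$ is a prime with $p>3$ and $n>1$ is an integer with $\gcd(n,p)=\gcd(n,p^2-1)=1$ (so $T_n$ permutes $\mathbb{Z}_{p^j}$ for all $j\ge1$). $T_n(x)\in\mathbb{Z}[x]$ is the Chebyshev polynomial of the first kind: $T_0=1$, $T_1=x$, $T_d=2xT_{d-1}-T_{d-2}$. $T_n^i$ is the $i$-fold composition of $T_n$ ($T_n^0(x)=x$). The least period of $(T_n^i(x)\bmod p^j)_{i\ge0}$ is the least positive integer $N$ with $T_n^N(x)\equiv x\pmod{p^j}$. *)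

theory Defs
  imports "HOL-Computational_Algebra.Polynomial" "HOL-Number_Theory.Cong"
begin

fun chebT :: "nat \<Rightarrow> int poly" where
  "chebT 0 = 1"
| "chebT (Suc 0) = [:0, 1:]"
| "chebT (Suc (Suc d)) = [:0, 2:] * chebT (Suc d) - chebT d"

definition chebT_iter :: "nat \<Rightarrow> nat \<Rightarrow> int \<Rightarrow> int" where
  "chebT_iter n i x = ((poly (chebT n)) ^^ i) x"

definition cheb_period :: "nat \<Rightarrow> int \<Rightarrow> int \<Rightarrow> nat" where
  "cheb_period n x m = (LEAST N. 0 < N \<and> [chebT_iter n N x = x] (mod m))"

end

theory Submission
  imports Defs "HOL-Number_Theory.Euler_Criterion"
begin

(* Write period j for the least period of the orbit of x modulo p^j.  The period at level
   j + 1 is a multiple m * period j, and m is governed by two numbers attached to the cycle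
   modulo p^j: its displacement t, defined by T^(period j)(x) = x + p^j t, and its multiplier
   c, the derivative of T^(period j) at x.  A first-order Taylor expansion gives
   T^(i * period j)(x) = x + p^j t (1 + c + ... + c^(i-1)) modulo p^(j+1), so m = 1 if p | t,
   m = p if c = 1 (mod p), and otherwise m divides p - 1 and afterwards c = 1 (mod p).
   Once j >= 2, p does not divide t and c = 1 (mod p), the same expansion modulo p^(j+2)
   shows that this stable state persists, since 1 + c + ... + c^(p-1) = p (mod p^2) for odd p;
   from then on the period is multiplied by p at each level.  Before the stable state is
   reached the period is at most p (p - 1), because the period modulo p is at most p - 1
   (the orbit avoids the fixed point 1 of T_n).  Hence period w >= p^2 forces stability at w.

   That the orbit is periodic at all is seen in Z[sqrt D], D = x^2 - 1: T_m(x) is the rational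
   part of u^m for the unit u = x + sqrt D.  Modulo p, u^p is x, u or u^-1 according to the
   Legendre symbol of D, so the order of u modulo p^(j+1) divides 2 p (p^2 - 1) p^j.  This
   number is coprime to n, so some power n^N is 1 modulo it, and T_n^N = T_(n^N). *)

section \<open>Iterates of integer polynomials\<close>

lemma poly_cong:
  fixes f :: "int poly"
  assumes "[a = b] (mod m)"
  shows "[poly f a = poly f b] (mod m)"
  by (induction f rule: pCons_induct) (simp_all add: assms cong_add cong_mult)

lemma funpow_poly_cong:
  fixes f :: "int poly"
  assumes "[a = b] (mod m)"
  shows "[(poly f ^^ i) a = (poly f ^^ i) b] (mod m)"
  by (induction i) (simp_all add: assms poly_cong)

lemma poly_first_order_expansion:
  fixes f :: "'a::idom poly"
  shows "\<exists>r. poly f (y + e) = poly f y + e * poly (pderiv f) y + e\<^sup>2 * r"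
proof (induction f rule: pCons_induct)
  case 0
  show ?case by simp
next
  case (pCons c f)
  then obtain r where r: "poly f (y + e) = poly f y + e * poly (pderiv f) y + e\<^sup>2 * r"
    by blast
  have "poly (pCons c f) (y + e) =
      poly (pCons c f) y + e * poly (pderiv (pCons c f)) y + e\<^sup>2 * (poly (pderiv f) y + (y + e) * r)"
    by (simp only: poly_pCons r) (simp add: pderiv_pCons power2_eq_square algebra_simps)
  then show ?case by blast
qed

text \<open>By the chain rule, this is the derivative of \<open>poly f ^^ N\<close> at \<open>y\<close>.\<close>
definition iter_deriv :: "'a::idom poly \<Rightarrow> nat \<Rightarrow> 'a \<Rightarrow> 'a" where
  "iter_deriv f N y = (\<Prod>i<N. poly (pderiv f) ((poly f ^^ i) y))"

lemma iter_deriv_0 [simp]: "iter_deriv f 0 y = 1"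
  by (simp add: iter_deriv_def)

lemma iter_deriv_Suc: "iter_deriv f (Suc N) y = poly (pderiv f) ((poly f ^^ N) y) * iter_deriv f N y"
  by (simp add: iter_deriv_def)

lemma iter_deriv_add: "iter_deriv f (M + N) y = iter_deriv f M ((poly f ^^ N) y) * iter_deriv f N y"
  by (induction M) (simp_all add: iter_deriv_Suc funpow_add)

lemma funpow_first_order_expansion:
  fixes f :: "'a::idom poly"
  shows "\<exists>r. (poly f ^^ N) (y + e) = (poly f ^^ N) y + e * iter_deriv f N y + e\<^sup>2 * r"
proof (induction N)
  case 0
  show ?case by simp
next
  case (Suc N)
  then obtain r where r: "(poly f ^^ N) (y + e) = (poly f ^^ N) y + e * iter_deriv f N y + e\<^sup>2 * r"
    by blast
  define z where "z = (poly f ^^ N) y"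
  define \<delta> where "\<delta> = iter_deriv f N y + e * r"
  have "(poly f ^^ N) (y + e) = z + e * \<delta>"
    using r by (simp add: z_def \<delta>_def power2_eq_square algebra_simps)
  moreover obtain r' where
    "poly f (z + e * \<delta>) = poly f z + (e * \<delta>) * poly (pderiv f) z + (e * \<delta>)\<^sup>2 * r'"
    using poly_first_order_expansion by blast
  ultimately have "(poly f ^^ Suc N) (y + e) =
      (poly f ^^ Suc N) y + e * iter_deriv f (Suc N) y + e\<^sup>2 * (r * poly (pderiv f) z + \<delta>\<^sup>2 * r')"
    by (simp add: iter_deriv_Suc z_def[symmetric] \<delta>_def power2_eq_square algebra_simps)
  then show ?case by blast
qed

lemma iter_deriv_cong:
  fixes f :: "int poly"
  assumes "[y = y'] (mod m)"
  shows "[iter_deriv f N y = iter_deriv f N y'] (mod m)"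
  unfolding iter_deriv_def by (intro cong_prod poly_cong funpow_poly_cong assms)

lemma funpow_mult_cong:
  fixes f :: "int poly"
  assumes "[(poly f ^^ N) y = y] (mod m)"
  shows "[(poly f ^^ (N * q)) y = y] (mod m)"
proof (induction q)
  case 0
  show ?case by simp
next
  case (Suc q)
  have "(poly f ^^ (N * Suc q)) y = (poly f ^^ N) ((poly f ^^ (N * q)) y)"
    by (simp add: funpow_add)
  also have "[(poly f ^^ N) ((poly f ^^ (N * q)) y) = (poly f ^^ N) y] (mod m)"
    by (rule funpow_poly_cong[OF Suc.IH])
  finally show ?case
    using assms by (rule cong_trans)
qed

lemma iter_deriv_mult_cong:
  fixes f :: "int poly"
  assumes "[(poly f ^^ N) y = y] (mod m)"
  shows "[iter_deriv f (N * q) y = iter_deriv f N y ^ q] (mod m)"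
proof (induction q)
  case 0
  show ?case by simp
next
  case (Suc q)
  have "iter_deriv f (N * Suc q) y = iter_deriv f N ((poly f ^^ (N * q)) y) * iter_deriv f (N * q) y"
    by (simp add: iter_deriv_add[symmetric] add.commute)
  also have "[iter_deriv f N ((poly f ^^ (N * q)) y) * iter_deriv f (N * q) y =
      iter_deriv f N y * iter_deriv f N y ^ q] (mod m)"
    by (intro cong_mult Suc.IH iter_deriv_cong funpow_mult_cong assms)
  finally show ?case by simp
qed

definition orbit_period :: "int poly \<Rightarrow> int \<Rightarrow> int \<Rightarrow> nat" where
  "orbit_period f x m = (LEAST N. 0 < N \<and> [(poly f ^^ N) x = x] (mod m))"

lemma cheb_period_eq_orbit_period: "cheb_period n x m = orbit_period (chebT n) x m"
  by (simp add: cheb_period_def orbit_period_def chebT_iter_def)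

lemma
  assumes "0 < N" "[(poly f ^^ N) x = x] (mod m)"
  shows orbit_period_pos: "0 < orbit_period f x m"
    and orbit_period_dvd_iff: "[(poly f ^^ i) x = x] (mod m) \<longleftrightarrow> orbit_period f x m dvd i"
proof -
  define P where "P = orbit_period f x m"
  have least: "0 < P \<and> [(poly f ^^ P) x = x] (mod m)"
    unfolding P_def orbit_period_def by (rule LeastI[of _ N]) (use assms in auto)
  then show "0 < orbit_period f x m"
    by (simp add: P_def)
  show "[(poly f ^^ i) x = x] (mod m) \<longleftrightarrow> orbit_period f x m dvd i"
    unfolding P_def[symmetric]
  proof
    assume i: "[(poly f ^^ i) x = x] (mod m)"
    have "(poly f ^^ i) x = (poly f ^^ (i mod P)) ((poly f ^^ (P * (i div P))) x)"
      by (metis comp_apply funpow_add mod_mult_div_eq)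
    also have "[(poly f ^^ (i mod P)) ((poly f ^^ (P * (i div P))) x) = (poly f ^^ (i mod P)) x] (mod m)"
      using least by (intro funpow_poly_cong funpow_mult_cong) simp
    finally have "[(poly f ^^ (i mod P)) x = x] (mod m)"
      using i by (metis cong_sym cong_trans)
    moreover have "i mod P < P"
      using least by simp
    ultimately have "\<not> 0 < i mod P"
      using not_less_Least[of "i mod P" "\<lambda>N. 0 < N \<and> [(poly f ^^ N) x = x] (mod m)"]
      unfolding P_def orbit_period_def by auto
    then show "P dvd i"
      by auto
  next
    assume "P dvd i"
    then show "[(poly f ^^ i) x = x] (mod m)"
      using funpow_mult_cong least by auto
  qed
qed

lemma orbit_period_return:
  fixes f :: "int poly"
  assumes "0 < N" "[(poly f ^^ N) x = x] (mod m)"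
    and "[(poly f ^^ i) x = y] (mod m)" "i \<le> orbit_period f x m"
  shows "[x = (poly f ^^ (orbit_period f x m - i)) y] (mod m)"
proof -
  define P where "P = orbit_period f x m"
  have "[(poly f ^^ P) x = x] (mod m)"
    unfolding P_def using orbit_period_dvd_iff[OF assms(1,2)] by simp
  moreover have "(poly f ^^ P) x = (poly f ^^ (P - i)) ((poly f ^^ i) x)"
    using assms(4) by (metis P_def comp_apply funpow_add le_add_diff_inverse2)
  ultimately show ?thesis
    using funpow_poly_cong[OF assms(3)] unfolding P_def by (metis cong_sym cong_trans)
qed

lemma inj_on_orbit_residues:
  fixes f :: "int poly"
  assumes "0 < N" "[(poly f ^^ N) x = x] (mod m)"
  shows "inj_on (\<lambda>i. (poly f ^^ i) x mod m) {..<orbit_period f x m}"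
proof (rule linorder_inj_onI')
  fix i i' assume "i \<in> {..<orbit_period f x m}" "i' \<in> {..<orbit_period f x m}" "i < i'"
  show "(poly f ^^ i) x mod m \<noteq> (poly f ^^ i') x mod m"
  proof
    assume "(poly f ^^ i) x mod m = (poly f ^^ i') x mod m"
    then have "[(poly f ^^ i') x = (poly f ^^ i) x] (mod m)"
      by (simp add: cong_def)
    then have "[x = (poly f ^^ (orbit_period f x m - i')) ((poly f ^^ i) x)] (mod m)"
      using \<open>i' \<in> {..<orbit_period f x m}\<close> by (intro orbit_period_return[OF assms]) auto
    then have "orbit_period f x m dvd orbit_period f x m - i' + i"
      by (simp add: funpow_add cong_sym_eq flip: orbit_period_dvd_iff[OF assms])
    moreover have "0 < orbit_period f x m - i' + i" "orbit_period f x m - i' + i < orbit_period f x m"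
      using \<open>i < i'\<close> \<open>i' \<in> {..<orbit_period f x m}\<close> by auto
    ultimately show False
      by (simp add: nat_dvd_not_less)
  qed
qed

lemma orbit_period_eq_1_if_hits_fixed_point:
  fixes f :: "int poly"
  assumes "0 < N" "[(poly f ^^ N) x = x] (mod m)" and fixed: "poly f a = a"
    and "[(poly f ^^ i) x = a] (mod m)" "i \<le> orbit_period f x m"
  shows "orbit_period f x m = 1"
proof -
  have "(poly f ^^ k) a = a" for k
    by (induction k) (simp_all add: fixed)
  then have "[x = a] (mod m)"
    using orbit_period_return[OF assms(1,2,4,5)] by simp
  then have "[poly f x = x] (mod m)"
    using poly_cong[of x a m f] fixed by (metis cong_sym cong_trans)
  then show ?thesis
    using orbit_period_dvd_iff[OF assms(1,2), of 1] by simp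
qed

lemma orbit_period_le_if_fixed_point:
  fixes f :: "int poly"
  assumes "prime p" "poly f a = a" "0 < N" "[(poly f ^^ N) x = x] (mod int p)"
  shows "orbit_period f x (int p) \<le> p - 1"
proof (cases "orbit_period f x (int p) = 1")
  case True
  then show ?thesis
    using prime_ge_2_nat[OF assms(1)] by simp
next
  case False
  let ?r = "\<lambda>i. (poly f ^^ i) x mod int p"
  have "?r ` {..<orbit_period f x (int p)} \<subseteq> {0..<int p} - {a mod int p}"
    using orbit_period_eq_1_if_hits_fixed_point[OF assms(3,4,2)] False prime_gt_0_nat[OF assms(1)]
    by (force simp: cong_def)
  then have "card (?r ` {..<orbit_period f x (int p)}) \<le> card ({0..<int p} - {a mod int p})"
    by (intro card_mono) auto
  then show ?thesis
    using inj_on_orbit_residues[OF assms(3,4)] prime_gt_0_nat[OF assms(1)] by (simp add: card_image)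
qed

lemma iterate_linearization:
  fixes F :: "int \<Rightarrow> int"
  assumes return: "F x = x + q * t"
    and expansion: "\<And>e. \<exists>r. F (x + e) = F x + e * c + e\<^sup>2 * r"
    and "M dvd q"
  shows "\<exists>d. (F ^^ i) x = x + q * d \<and> [d = t * (\<Sum>l<i. c ^ l)] (mod M)"
proof (induction i)
  case 0
  show ?case
    by (intro exI[of _ 0]) simp
next
  case (Suc i)
  then obtain d where d: "(F ^^ i) x = x + q * d" "[d = t * (\<Sum>l<i. c ^ l)] (mod M)"
    by blast
  obtain r where r: "F (x + q * d) = F x + q * d * c + (q * d)\<^sup>2 * r"
    using expansion by blast
  have "(F ^^ Suc i) x = x + q * (t + d * c + q * d\<^sup>2 * r)"
    by (simp only: funpow.simps comp_def d(1) r return) (simp add: power2_eq_square algebra_simps)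
  moreover have "[t + d * c + q * d\<^sup>2 * r = t + t * (\<Sum>l<i. c ^ l) * c + 0] (mod M)"
    using \<open>M dvd q\<close> by (intro cong_add cong_mult d(2) cong_refl) (simp add: cong_0_iff)
  moreover have "t + t * (\<Sum>l<i. c ^ l) * c + 0 = t * (\<Sum>l<Suc i. c ^ l)"
    by (subst sum.lessThan_Suc_shift) (simp add: sum_distrib_left algebra_simps)
  ultimately show ?case
    by auto
qed

section \<open>Geometric sums modulo a prime\<close>

lemma fermat_theorem_int:
  fixes c :: int
  assumes "prime p" "\<not> int p dvd c"
  shows "[c ^ (p - 1) = 1] (mod int p)"
proof -
  have "[nat (c mod int p) ^ (p - 1) = 1] (mod p)"
    using assms prime_gt_0_nat[of p]
    by (intro fermat_theorem) (auto simp flip: int_dvd_int_iff simp: dvd_mod_iff)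
  then have "[(c mod int p) ^ (p - 1) = 1] (mod int p)"
    using prime_gt_0_nat[OF assms(1)] by (simp flip: cong_int_iff)
  then show ?thesis
    by (metis cong_def power_mod)
qed

lemma fermat_little_int:
  fixes c :: int
  assumes "prime p"
  shows "[c ^ p = c] (mod int p)"
proof (cases "int p dvd c")
  case True
  then have "[c = 0] (mod int p)"
    by (simp add: cong_0_iff)
  moreover from this have "[c ^ p = 0] (mod int p)"
    using cong_pow[of c 0 "int p" p] prime_gt_0_nat[OF assms] by (simp add: zero_power)
  ultimately show ?thesis
    by (meson cong_sym cong_trans)
next
  case False
  then have "[c * c ^ (p - 1) = c * 1] (mod int p)"
    by (intro cong_mult cong_refl fermat_theorem_int assms)
  then show ?thesis
    using prime_gt_0_nat[OF assms] by (simp flip: power_Suc)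
qed

lemma geometric_sum_cong_prime_square:
  fixes c :: int
  assumes "prime p" "odd p" "[c = 1] (mod int p)"
  shows "[(\<Sum>l<p. c ^ l) = int p] (mod (int p)\<^sup>2)"
proof -
  obtain e where e: "c = 1 + int p * e"
    using assms(3) by (metis cong_iff_lin cong_sym)
  have power: "[c ^ l = 1 + int l * int p * e] (mod (int p)\<^sup>2)" for l
  proof (induction l)
    case 0
    show ?case by simp
  next
    case (Suc l)
    have "[c ^ Suc l = c * (1 + int l * int p * e)] (mod (int p)\<^sup>2)"
      by (simp add: Suc.IH cong_mult)
    also have "c * (1 + int l * int p * e) = 1 + int (Suc l) * int p * e + (int p)\<^sup>2 * (int l * e\<^sup>2)"
      by (simp add: e power2_eq_square algebra_simps)
    finally show ?case
      by (simp add: cong_def)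
  qed
  obtain k where "p = 2 * k + 1"
    using \<open>odd p\<close> by (rule oddE)
  have "2 * (\<Sum>l<p. int l) = int p * (int p - 1)"
    by (induction p) (auto simp: algebra_simps)
  then have sum_of_int: "(\<Sum>l<p. int l) = int p * int k"
    using \<open>p = 2 * k + 1\<close> by simp
  have "[(\<Sum>l<p. c ^ l) = (\<Sum>l<p. 1 + int l * int p * e)] (mod (int p)\<^sup>2)"
    by (intro cong_sum power)
  also have "(\<Sum>l<p. 1 + int l * int p * e) = int p + (\<Sum>l<p. int l) * (int p * e)"
    by (simp add: sum.distrib sum_distrib_right mult.assoc)
  also have "\<dots> = int p + (int p)\<^sup>2 * (int k * e)"
    by (simp add: sum_of_int power2_eq_square algebra_simps)
  also have "[int p + (int p)\<^sup>2 * (int k * e) = int p] (mod (int p)\<^sup>2)"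
    by (simp add: cong_add_lcancel_0 cong_mult_self_left)
  finally show ?thesis .
qed

lemma geometric_sum_dvd_period_1:
  fixes t c :: int
  assumes "\<And>i. int p dvd t * (\<Sum>l<i. c ^ l) \<longleftrightarrow> m dvd i" "int p dvd t"
  shows "m = 1"
  using assms(1)[of 1] assms(2) by simp

lemma geometric_sum_dvd_period_prime:
  fixes t c :: int
  assumes "prime p" "\<And>i. int p dvd t * (\<Sum>l<i. c ^ l) \<longleftrightarrow> m dvd i"
    and "\<not> int p dvd t" "[c = 1] (mod int p)"
  shows "m = p"
proof -
  have "[(\<Sum>l<i. c ^ l) = (\<Sum>l<i. 1)] (mod int p)" for i
    by (intro cong_sum) (metis assms(4) cong_pow power_one)
  then have "[t * (\<Sum>l<i. c ^ l) = t * int i] (mod int p)" for i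
    by (simp add: cong_mult)
  then have "int p dvd t * (\<Sum>l<i. c ^ l) \<longleftrightarrow> int p dvd t * int i" for i
    by (rule cong_dvd_iff)
  also have "\<dots> i \<longleftrightarrow> p dvd i" for i
    using assms(1,3) by (simp add: prime_dvd_mult_iff)
  finally have "p dvd i \<longleftrightarrow> m dvd i" for i
    using assms(2) by blast
  then show "m = p"
    by (metis dvd_antisym dvd_refl)
qed

lemma geometric_sum_dvd_period_le:
  fixes t c :: int
  assumes "prime p" "0 < m" "\<And>i. int p dvd t * (\<Sum>l<i. c ^ l) \<longleftrightarrow> m dvd i"
    and "\<not> int p dvd t" "\<not> [c = 1] (mod int p)"
  shows "m \<le> p - 1" and "[c ^ m = 1] (mod int p)"
proof -
  have prime_int: "prime (int p)"
    using assms(1) by simp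
  have geometric: "(c - 1) * (\<Sum>l<i. c ^ l) = c ^ i - 1" for i
    by (simp add: power_diff_1_eq)
  have "int p dvd (\<Sum>l<m. c ^ l)"
    using assms(3)[of m] assms(4) prime_int by (simp add: prime_dvd_mult_iff)
  then have "int p dvd c ^ m - 1"
    by (metis geometric dvd_mult)
  then show "[c ^ m = 1] (mod int p)"
    by (simp add: cong_iff_dvd_diff)
  have "\<not> int p dvd c"
  proof
    assume "int p dvd c"
    then have "int p dvd c ^ m"
      using \<open>0 < m\<close> dvd_power dvd_trans by blast
    with \<open>int p dvd c ^ m - 1\<close> have "int p dvd 1"
      by (metis dvd_diff_right_iff)
    with prime_int show False
      by simp
  qed
  then have "int p dvd c ^ (p - 1) - 1"
    using fermat_theorem_int[OF assms(1)] by (simp add: cong_iff_dvd_diff)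
  moreover have "\<not> int p dvd c - 1"
    using assms(5) by (simp add: cong_iff_dvd_diff)
  ultimately have "int p dvd (\<Sum>l<p - 1. c ^ l)"
    using prime_int by (simp add: geometric[symmetric] prime_dvd_mult_iff)
  then have "m dvd p - 1"
    using assms(3) by (metis dvd_mult)
  moreover have "0 < p - 1"
    using prime_gt_1_nat[OF assms(1)] by simp
  ultimately show "m \<le> p - 1"
    by (simp add: dvd_imp_le)
qed

section \<open>Periods modulo prime powers\<close>

locale prime_power_orbit =
  fixes f :: "int poly" and x :: int and p :: nat
  assumes prime: "prime p" and odd: "odd p"
    and periodic: "\<And>j. \<exists>N>0. [(poly f ^^ N) x = x] (mod int p ^ j)"
begin

definition period :: "nat \<Rightarrow> nat" where
  "period j = orbit_period f x (int p ^ j)"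

definition displacement :: "nat \<Rightarrow> int" where
  "displacement j = ((poly f ^^ period j) x - x) div int p ^ j"

definition multiplier :: "nat \<Rightarrow> int" where
  "multiplier j = iter_deriv f (period j) x"

definition period_ratio :: "nat \<Rightarrow> nat" where
  "period_ratio j = period (Suc j) div period j"

definition stable :: "nat \<Rightarrow> bool" where
  "stable j \<longleftrightarrow> 2 \<le> j \<and> \<not> int p dvd displacement j \<and> [multiplier j = 1] (mod int p)"

lemma period_pos: "0 < period j"
  using periodic[of j] orbit_period_pos unfolding period_def by blast

lemma period_dvd_iff: "[(poly f ^^ i) x = x] (mod int p ^ j) \<longleftrightarrow> period j dvd i"
  using periodic[of j] orbit_period_dvd_iff unfolding period_def by blast

lemma funpow_period_cong: "[(poly f ^^ period j) x = x] (mod int p ^ j)"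
  by (simp add: period_dvd_iff)

lemma funpow_period: "(poly f ^^ period j) x = x + int p ^ j * displacement j"
proof -
  have "int p ^ j dvd (poly f ^^ period j) x - x"
    using funpow_period_cong by (simp add: cong_iff_dvd_diff)
  then show ?thesis
    by (simp add: displacement_def)
qed

lemma funpow_period_cong_mod_prime:
  assumes "1 \<le> j"
  shows "[(poly f ^^ period j) x = x] (mod int p)"
  using funpow_period_cong by (rule cong_dvd_modulus) (use assms in \<open>simp add: dvd_power\<close>)

lemma period_Suc: "period (Suc j) = period j * period_ratio j"
proof -
  have "[(poly f ^^ period (Suc j)) x = x] (mod int p ^ j)"
    using funpow_period_cong by (rule cong_dvd_modulus) (simp add: le_imp_power_dvd)
  then have "period j dvd period (Suc j)"
    by (simp add: period_dvd_iff)
  then show ?thesis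
    by (simp add: period_ratio_def)
qed

lemma period_ratio_pos: "0 < period_ratio j"
  using period_pos[of "Suc j"] by (simp add: period_Suc)

lemma period_ratio_dvd_iff:
  assumes "1 \<le> j"
  shows "int p dvd displacement j * (\<Sum>l<i. multiplier j ^ l) \<longleftrightarrow> period_ratio j dvd i"
proof -
  have "int p dvd int p ^ j"
    using assms by (simp add: dvd_power)
  then obtain d where d: "(poly f ^^ (period j * i)) x = x + int p ^ j * d"
    "[d = displacement j * (\<Sum>l<i. multiplier j ^ l)] (mod int p)"
    using iterate_linearization[OF funpow_period[of j] funpow_first_order_expansion, where i = i]
    by (auto simp: multiplier_def funpow_mult)
  have "period_ratio j dvd i \<longleftrightarrow> period (Suc j) dvd period j * i"
    using period_pos[of j] by (simp add: period_Suc)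
  also have "\<dots> \<longleftrightarrow> [(poly f ^^ (period j * i)) x = x] (mod int p ^ Suc j)"
    by (rule period_dvd_iff[symmetric])
  also have "\<dots> \<longleftrightarrow> int p ^ j * int p dvd int p ^ j * d"
    unfolding d(1) cong_iff_dvd_diff by (simp add: mult.commute)
  also have "\<dots> \<longleftrightarrow> int p dvd d"
    using prime by simp
  also have "\<dots> \<longleftrightarrow> int p dvd displacement j * (\<Sum>l<i. multiplier j ^ l)"
    using d(2) by (rule cong_dvd_iff)
  finally show ?thesis
    by simp
qed

lemma multiplier_Suc_cong:
  assumes "1 \<le> j"
  shows "[multiplier (Suc j) = multiplier j ^ period_ratio j] (mod int p)"
  unfolding multiplier_def period_Suc
  by (rule iter_deriv_mult_cong[OF funpow_period_cong_mod_prime[OF assms]])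

lemma period_Suc_if_dvd_displacement:
  assumes "1 \<le> j" "int p dvd displacement j"
  shows "period (Suc j) = period j" and "[multiplier (Suc j) = multiplier j] (mod int p)"
  using geometric_sum_dvd_period_1[OF period_ratio_dvd_iff[OF assms(1)] assms(2)]
    multiplier_Suc_cong[OF assms(1)]
  by (simp_all add: period_Suc)

lemma period_Suc_if_multiplier_one:
  assumes "1 \<le> j" "\<not> int p dvd displacement j" "[multiplier j = 1] (mod int p)"
  shows "period (Suc j) = p * period j" and "[multiplier (Suc j) = 1] (mod int p)"
proof -
  have ratio: "period_ratio j = p"
    using geometric_sum_dvd_period_prime[OF prime period_ratio_dvd_iff[OF assms(1)] assms(2,3)] .
  then show "period (Suc j) = p * period j"
    by (simp add: period_Suc)
  have "[multiplier (Suc j) = multiplier j ^ p] (mod int p)"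
    using multiplier_Suc_cong[OF assms(1)] by (simp add: ratio)
  also have "[multiplier j ^ p = 1 ^ p] (mod int p)"
    using assms(3) by (rule cong_pow)
  finally show "[multiplier (Suc j) = 1] (mod int p)"
    by simp
qed

lemma period_Suc_if_multiplier_not_one:
  assumes "1 \<le> j" "\<not> int p dvd displacement j" "\<not> [multiplier j = 1] (mod int p)"
  shows "period (Suc j) \<le> (p - 1) * period j" and "[multiplier (Suc j) = 1] (mod int p)"
proof -
  have ratio: "period_ratio j \<le> p - 1" "[multiplier j ^ period_ratio j = 1] (mod int p)"
    using geometric_sum_dvd_period_le[OF prime period_ratio_pos period_ratio_dvd_iff[OF assms(1)] assms(2,3)]
    by simp_all
  then show "period (Suc j) \<le> (p - 1) * period j"
    by (simp add: period_Suc)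
  show "[multiplier (Suc j) = 1] (mod int p)"
    using multiplier_Suc_cong[OF assms(1)] ratio(2) by (rule cong_trans)
qed

lemma stable_Suc:
  assumes "stable j"
  shows "stable (Suc j)" and "period (Suc j) = p * period j"
proof -
  have j: "2 \<le> j" and t: "\<not> int p dvd displacement j" and c: "[multiplier j = 1] (mod int p)"
    using assms by (simp_all add: stable_def)
  note Suc_facts = period_Suc_if_multiplier_one[OF _ t c]
  show "period (Suc j) = p * period j"
    using Suc_facts(1) j by simp
  have "(int p)\<^sup>2 dvd int p ^ j"
    using j by (rule le_imp_power_dvd)
  then obtain d where d: "(poly f ^^ (period j * p)) x = x + int p ^ j * d"
    "[d = displacement j * (\<Sum>l<p. multiplier j ^ l)] (mod (int p)\<^sup>2)"
    using iterate_linearization[OF funpow_period[of j] funpow_first_order_expansion, where i = p]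
    by (auto simp: multiplier_def funpow_mult)
  have "[d = displacement j * int p] (mod (int p)\<^sup>2)"
    using d(2) cong_mult[OF cong_refl geometric_sum_cong_prime_square[OF prime odd c]]
    by (rule cong_trans)
  then obtain z where z: "d = displacement j * int p + (int p)\<^sup>2 * z"
    by (metis cong_iff_lin cong_sym)
  have "int p ^ Suc j * displacement (Suc j) = int p ^ Suc j * (displacement j + int p * z)"
    using funpow_period[of "Suc j"] d(1) Suc_facts(1) j
    by (simp add: z power2_eq_square algebra_simps)
  then have "displacement (Suc j) = displacement j + int p * z"
    using prime by simp
  then have "\<not> int p dvd displacement (Suc j)"
    using t by (simp add: dvd_add_left_iff)
  then show "stable (Suc j)"
    using j Suc_facts(2) by (simp add: stable_def)
qed

lemma period_le_unless_stable:
  assumes fixed: "poly f a = a" and "1 \<le> j" "\<not> stable j"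
  shows "period j \<le> (if 2 \<le> j \<and> [multiplier j = 1] (mod int p) then p * (p - 1) else p - 1)"
  using assms(2,3)
proof (induction j rule: dec_induct)
  case base
  show ?case
    using orbit_period_le_if_fixed_point[OF prime fixed] periodic[of 1] by (auto simp: period_def)
next
  case (step j)
  have "\<not> stable j"
    using step.prems stable_Suc(1) by blast
  then have IH: "period j \<le> (if 2 \<le> j \<and> [multiplier j = 1] (mod int p) then p * (p - 1) else p - 1)"
    by (rule step.IH)
  consider "int p dvd displacement j"
    | "\<not> int p dvd displacement j" "[multiplier j = 1] (mod int p)"
    | "\<not> int p dvd displacement j" "\<not> [multiplier j = 1] (mod int p)"
    by blast
  then show ?case
  proof cases
    case 1
    note Suc_facts = period_Suc_if_dvd_displacement[OF step.hyps(1) 1]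
    have "[multiplier (Suc j) = 1] (mod int p) \<longleftrightarrow> [multiplier j = 1] (mod int p)"
      using Suc_facts(2) by (meson cong_sym cong_trans)
    moreover have "period j \<le> p * (p - 1)"
    proof (cases "2 \<le> j \<and> [multiplier j = 1] (mod int p)")
      case True
      with IH show ?thesis by simp
    next
      case False
      with IH have "period j \<le> p - 1" by simp
      then show ?thesis by (rule order_trans) simp
    qed
    ultimately show ?thesis
      using IH Suc_facts(1) by (auto split: if_splits)
  next
    case 2
    with \<open>\<not> stable j\<close> have "j = 1"
      using step.hyps(1) by (simp add: stable_def)
    then show ?thesis
      using IH period_Suc_if_multiplier_one[OF step.hyps(1) 2] by simp
  next
    case 3
    then have "period j \<le> p - 1"
      using IH by simp
    then have "period (Suc j) \<le> p * (p - 1)"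
      using period_Suc_if_multiplier_not_one(1)[OF step.hyps(1) 3]
      by (metis mult_le_mono1 mult.commute order_trans diff_le_self)
    then show ?thesis
      using period_Suc_if_multiplier_not_one(2)[OF step.hyps(1) 3] step.hyps by simp
  qed
qed

theorem period_growth:
  assumes "poly f a = a" "1 \<le> w" "p\<^sup>2 \<le> period w" "w \<le> k"
  shows "period k = period w * p ^ (k - w)"
proof -
  have "(if 2 \<le> w \<and> [multiplier w = 1] (mod int p) then p * (p - 1) else p - 1) < p\<^sup>2"
  proof -
    have "p - 1 < p * p" "p * (p - 1) < p * p"
      using prime_gt_0_nat[OF prime] by (meson diff_less le_square less_le_trans zero_less_one, simp)
    then show ?thesis
      by (simp add: power2_eq_square)
  qed
  then have "stable w"
    using period_le_unless_stable[OF assms(1,2)] assms(3) by (metis le_less_trans not_le)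
  show ?thesis
    using \<open>w \<le> k\<close>
  proof (induction k rule: dec_induct)
    case base
    show ?case by simp
  next
    case (step k)
    have "stable k"
      using step.hyps \<open>stable w\<close> by (induction k rule: dec_induct) (simp_all add: stable_Suc)
    then show ?case
      using step by (simp add: stable_Suc Suc_diff_le)
  qed
qed

end

section \<open>Arithmetic in \<open>\<int>[\<surd>D]\<close>\<close>

definition cong_mod2 :: "'a::comm_ring_1 \<Rightarrow> 'a \<Rightarrow> 'a \<Rightarrow> 'a \<Rightarrow> bool" where
  "cong_mod2 q c x y \<longleftrightarrow> (\<exists>a b. x - y = q * a + c * b)"

lemma cong_mod2_refl [simp]: "cong_mod2 q c x x"
  unfolding cong_mod2_def by (intro exI[of _ 0]) simp

lemma cong_mod2_eqI: "x = q * a + y \<Longrightarrow> cong_mod2 q c x y"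
  unfolding cong_mod2_def by (intro exI[of _ a] exI[of _ 0]) simp

lemma cong_mod2_sym:
  assumes "cong_mod2 q c x y"
  shows "cong_mod2 q c y x"
proof -
  obtain a b where "x - y = q * a + c * b"
    using assms unfolding cong_mod2_def by blast
  then have "y - x = q * (- a) + c * (- b)"
    by (simp add: algebra_simps)
  then show ?thesis
    unfolding cong_mod2_def by blast
qed

lemma cong_mod2_add:
  assumes "cong_mod2 q c x y" "cong_mod2 q c x' y'"
  shows "cong_mod2 q c (x + x') (y + y')"
proof -
  obtain a b a' b' where "x - y = q * a + c * b" "x' - y' = q * a' + c * b'"
    using assms unfolding cong_mod2_def by blast
  then have "x + x' - (y + y') = q * (a + a') + c * (b + b')"
    by (simp add: algebra_simps)
  then show ?thesis
    unfolding cong_mod2_def by blast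
qed

lemma cong_mod2_trans [trans]:
  assumes "cong_mod2 q c x y" "cong_mod2 q c y z"
  shows "cong_mod2 q c x z"
  using cong_mod2_add[OF assms] unfolding cong_mod2_def by simp

lemma cong_mod2_diff:
  assumes "cong_mod2 q c x y" "cong_mod2 q c x' y'"
  shows "cong_mod2 q c (x - x') (y - y')"
  using cong_mod2_add[OF assms(1) cong_mod2_sym[OF assms(2)]] unfolding cong_mod2_def
  by (simp add: algebra_simps)

lemma cong_mod2_mult:
  assumes "cong_mod2 q c x y" "cong_mod2 q c x' y'"
  shows "cong_mod2 q c (x * x') (y * y')"
proof -
  obtain a b a' b' where "x - y = q * a + c * b" "x' - y' = q * a' + c * b'"
    using assms unfolding cong_mod2_def by blast
  then have "x * x' - y * y' = q * (a * x' + y * a') + c * (b * x' + y * b')"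
    by (simp add: algebra_simps)
  then show ?thesis
    unfolding cong_mod2_def by blast
qed

lemma cong_mod2_pow: "cong_mod2 q c x y \<Longrightarrow> cong_mod2 q c (x ^ k) (y ^ k)"
  by (induction k) (simp_all add: cong_mod2_mult)

lemma cong_mod2_pow_one_dvd:
  assumes "cong_mod2 q c (x ^ e) 1" "e dvd e'"
  shows "cong_mod2 q c (x ^ e') 1"
  using cong_mod2_pow[OF assms(1)] assms(2) by (auto simp: power_mult)

lemma cong_mod2_power_cancel:
  assumes "cong_mod2 q c (u * v) 1" "cong_mod2 q c (u ^ Suc k) u"
  shows "cong_mod2 q c (u ^ k) 1"
proof -
  have "u ^ k = u ^ k * 1"
    by simp
  also have "cong_mod2 q c \<dots> (u ^ k * (u * v))"
    by (rule cong_mod2_mult[OF cong_mod2_refl cong_mod2_sym[OF assms(1)]])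
  also have "u ^ k * (u * v) = u ^ Suc k * v"
    by (simp add: mult_ac)
  also have "cong_mod2 q c \<dots> (u * v)"
    by (rule cong_mod2_mult[OF assms(2) cong_mod2_refl])
  also have "cong_mod2 q c \<dots> 1"
    by (rule assms(1))
  finally show ?thesis .
qed

lemma cong_mod2_power_cong_1:
  assumes "cong_mod2 q c (u ^ E) 1" "[k = 1] (mod E)" "0 < k"
  shows "cong_mod2 q c (u ^ k) u"
proof -
  obtain r where "k = r * E + 1"
    using cong_le_nat[of 1 k E] assms(2,3) by auto
  then have "u ^ k = (u ^ E) ^ r * u"
    by (simp only: power_add power_one_right power_mult mult.commute[of r E])
  also have "cong_mod2 q c \<dots> (1 ^ r * u)"
    by (intro cong_mod2_mult cong_mod2_pow assms(1) cong_mod2_refl)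
  finally show ?thesis
    by simp
qed

lemma one_plus_power_expansion:
  fixes w :: "'a::comm_ring_1"
  shows "\<exists>r. (1 + w) ^ m = 1 + of_nat m * w + w\<^sup>2 * r"
proof (induction m)
  case 0
  show ?case
    by (intro exI[of _ 0]) simp
next
  case (Suc m)
  then obtain r where "(1 + w) ^ m = 1 + of_nat m * w + w\<^sup>2 * r"
    by blast
  then have "(1 + w) ^ Suc m = 1 + of_nat (Suc m) * w + w\<^sup>2 * (of_nat m + r + r * w)"
    by (simp add: power2_eq_square algebra_simps)
  then show ?case
    by blast
qed

lemma cong_mod2_one_power:
  fixes v :: "'a::comm_ring_1"
  assumes "cong_mod2 q c v 1" "d dvd of_nat m * c" "d dvd c\<^sup>2"
  shows "cong_mod2 q d (v ^ m) 1"
proof -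
  obtain a b where "v - 1 = q * a + c * b"
    using assms(1) unfolding cong_mod2_def by blast
  then have "cong_mod2 q d v (1 + c * b)"
    by (intro cong_mod2_eqI[where a = a]) (simp add: algebra_simps)
  then have "cong_mod2 q d (v ^ m) ((1 + c * b) ^ m)"
    by (rule cong_mod2_pow)
  moreover obtain r where r: "(1 + c * b) ^ m = 1 + of_nat m * (c * b) + (c * b)\<^sup>2 * r"
    using one_plus_power_expansion by blast
  obtain k l where "of_nat m * c = d * k" "c\<^sup>2 = d * l"
    using assms(2,3) by (elim dvdE)
  then have "(1 + c * b) ^ m - 1 = q * 0 + d * (k * b + l * b\<^sup>2 * r)"
    unfolding r by (simp add: power_mult_distrib algebra_simps)
  then have "cong_mod2 q d ((1 + c * b) ^ m) 1"
    unfolding cong_mod2_def by blast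
  ultimately show ?thesis
    by (rule cong_mod2_trans)
qed

lemma add_power_prime:
  fixes a b :: "'a::comm_ring_1"
  assumes "prime p"
  shows "\<exists>w. (a + b) ^ p = a ^ p + b ^ p + of_nat p * w"
proof -
  have p0: "0 < p"
    using assms by (rule prime_gt_0_nat)
  have choose: "p choose k = p * ((p choose k) div p)" if "k \<in> {1..<p}" for k
    using that assms by (simp add: dvd_choose_prime)
  have "{..p} = insert p (insert 0 {1..<p})"
    using p0 by auto
  then have "(a + b) ^ p = a ^ p + b ^ p + (\<Sum>k\<in>{1..<p}. of_nat (p choose k) * a ^ k * b ^ (p - k))"
    using p0 by (simp add: binomial_ring add_ac)
  also have "(\<Sum>k\<in>{1..<p}. of_nat (p choose k) * a ^ k * b ^ (p - k)) =
      of_nat p * (\<Sum>k\<in>{1..<p}. of_nat ((p choose k) div p) * a ^ k * b ^ (p - k))"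
    unfolding sum_distrib_left by (intro sum.cong refl) (subst choose, simp_all add: mult_ac)
  finally show ?thesis
    by blast
qed

text \<open>Congruence modulo \<open>M\<close> in \<open>\<int>[\<surd>D] = \<int>[X]/(X\<^sup>2 - D)\<close>; the element \<open>a + b \<surd>D\<close> is
  represented by the linear polynomial \<open>[:a, b:]\<close>.\<close>
abbreviation zsqrt_cong :: "int \<Rightarrow> int \<Rightarrow> int poly \<Rightarrow> int poly \<Rightarrow> bool" where
  "zsqrt_cong D M \<equiv> cong_mod2 [:-D, 0, 1:] [:M:]"

lemma zsqrt_division:
  fixes f :: "int poly"
  shows "\<exists>q r0 r1. f = [:-D, 0, 1:] * q + [:r0, r1:]"
proof (induction f rule: pCons_induct)
  case 0
  show ?case
    by (intro exI[of _ 0]) simp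
next
  case (pCons c f)
  then obtain q r0 r1 where "f = [:-D, 0, 1:] * q + [:r0, r1:]"
    by blast
  then have "pCons c f = [:-D, 0, 1:] * (pCons 0 q + [:r1:]) + [:c + r1 * D, r0:]"
    by (simp add: algebra_simps)
  then show ?case
    by blast
qed

lemma zsqrt_cong_linear_iff:
  "zsqrt_cong D M [:a0, a1:] [:b0, b1:] \<longleftrightarrow> [a0 = b0] (mod M) \<and> [a1 = b1] (mod M)"
proof
  assume "zsqrt_cong D M [:a0, a1:] [:b0, b1:]"
  then obtain a b where ab: "[:a0, a1:] - [:b0, b1:] = [:-D, 0, 1:] * a + [:M:] * b"
    unfolding cong_mod2_def by blast
  obtain q r0 r1 where b: "b = [:-D, 0, 1:] * q + [:r0, r1:]"
    using zsqrt_division by blast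
  have "[:a0, a1:] - [:b0, b1:] - [:M:] * [:r0, r1:] = [:-D, 0, 1:] * (a + [:M:] * q)"
    using ab unfolding b by (simp only: algebra_simps)
  then have rest: "[:a0 - b0 - M * r0, a1 - b1 - M * r1:] = [:-D, 0, 1:] * (a + [:M:] * q)"
    by (simp add: mult.commute)
  have "a + [:M:] * q = 0"
  proof (rule ccontr)
    assume "a + [:M:] * q \<noteq> 0"
    then have "degree ([:-D, 0, 1:] * (a + [:M:] * q)) = degree [:-D, 0, 1:] + degree (a + [:M:] * q)"
      by (intro degree_mult_eq) simp_all
    moreover have "degree [:-D, 0, 1:] = 2" "degree [:a0 - b0 - M * r0, a1 - b1 - M * r1:] \<le> 1"
      by simp_all
    ultimately show False
      unfolding rest by linarith
  qed
  then have "a0 - b0 = M * r0" "a1 - b1 = M * r1"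
    using rest by simp_all
  then show "[a0 = b0] (mod M) \<and> [a1 = b1] (mod M)"
    by (simp add: cong_iff_dvd_diff)
next
  assume "[a0 = b0] (mod M) \<and> [a1 = b1] (mod M)"
  then obtain k l where "a0 - b0 = M * k" "a1 - b1 = M * l"
    by (auto simp: cong_iff_dvd_diff elim!: dvdE)
  then have "[:a0, a1:] - [:b0, b1:] = [:-D, 0, 1:] * 0 + [:M:] * [:k, l:]"
    by simp
  then show "zsqrt_cong D M [:a0, a1:] [:b0, b1:]"
    unfolding cong_mod2_def by blast
qed

lemma zsqrt_cong_norm:
  fixes z s D :: int
  shows "zsqrt_cong D M ([:z, s:] * [:z, -s:]) [:z\<^sup>2 - D * s\<^sup>2:]"
  by (rule cong_mod2_eqI[where a = "[:-(s\<^sup>2):]"]) (simp add: power2_eq_square algebra_simps)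

lemma zsqrt_norm_one_square:
  fixes z s D :: int
  assumes "z\<^sup>2 - D * s\<^sup>2 = 1"
  shows "zsqrt_cong D M ([:z, s:] * [:z, s:]) ([:2 * z:] * [:z, s:] - 1)"
proof (rule cong_mod2_eqI[where a = "[:s\<^sup>2:]"])
  show "[:z, s:] * [:z, s:] = [:-D, 0, 1:] * [:s\<^sup>2:] + ([:2 * z:] * [:z, s:] - 1)"
    using assms by (simp add: one_pCons power2_eq_square algebra_simps)
qed

lemma zsqrt_frobenius:
  assumes "prime p" "odd p"
  shows "zsqrt_cong D (int p) ([:x, 1:] ^ p) [:x, Legendre D (int p):]"
proof -
  define h where "h = (p - 1) div 2"
  have p: "p = 2 * h + 1"
    using \<open>odd p\<close> by (simp add: h_def)
  obtain w where w: "([:x:] + [:0, 1:]) ^ p = [:x:] ^ p + [:0, 1:] ^ p + of_nat p * w"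
    using add_power_prime[OF \<open>prime p\<close>] by blast
  have "[:x, 1:] ^ p - ([:x:] ^ p + [:0, 1:] ^ p) = [:-D, 0, 1:] * 0 + [:int p:] * w"
    using w by (simp add: of_nat_poly)
  then have "zsqrt_cong D (int p) ([:x, 1:] ^ p) ([:x:] ^ p + [:0, 1:] ^ p)"
    unfolding cong_mod2_def by blast
  also have "[:0, 1:] ^ p = [:0, 1:] * ([:0, 1:] * [:0, 1:]) ^ h"
    by (simp add: p power_mult power2_eq_square)
  also have "zsqrt_cong D (int p) ([:x:] ^ p + [:0, 1:] * ([:0, 1:] * [:0, 1:]) ^ h)
      ([:x:] ^ p + [:0, 1:] * [:D:] ^ h)"
    by (intro cong_mod2_add cong_mod2_refl cong_mod2_mult cong_mod2_pow cong_mod2_eqI[where a = 1]) simp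
  also have "[:x:] ^ p + [:0, 1:] * [:D:] ^ h = [:x ^ p, D ^ h:]"
    by (simp add: poly_const_pow)
  also have "zsqrt_cong D (int p) \<dots> [:x, Legendre D (int p):]"
  proof -
    have "2 < p"
      using prime_ge_2_nat[OF assms(1)] \<open>odd p\<close> by (cases "p = 2") auto
    then show ?thesis
      unfolding zsqrt_cong_linear_iff h_def
      by (intro conjI fermat_little_int[OF assms(1)] cong_sym[OF euler_criterion[OF assms(1)]])
  qed
  finally show ?thesis .
qed

lemma zsqrt_unit_order_mod_prime:
  assumes "prime p" "odd p"
  shows "zsqrt_cong (x\<^sup>2 - 1) (int p) ([:x, 1:] ^ (2 * p * (p\<^sup>2 - 1))) 1"
proof -
  define D where "D = x\<^sup>2 - 1"
  define u where "u = [:x, 1:]"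
  define ubar where "ubar = [:x, -1:]"
  have p: "p\<^sup>2 - 1 = (p - 1) * (p + 1)" "p = Suc (p - 1)"
    using prime_gt_0_nat[OF assms(1)] by (simp_all add: power2_eq_square algebra_simps)
  have norm: "zsqrt_cong D (int p) (u * ubar) 1"
    using zsqrt_cong_norm[of D "int p" x 1] unfolding u_def ubar_def D_def by (simp add: pCons_one)
  have frobenius: "zsqrt_cong D (int p) (u ^ p) [:x, Legendre D (int p):]"
    unfolding u_def by (rule zsqrt_frobenius[OF assms])
  have "Legendre D (int p) \<in> {0, 1, -1}"
    by (simp add: Legendre_def)
  then consider "Legendre D (int p) = 0" | "Legendre D (int p) = 1" | "Legendre D (int p) = -1"
    by blast
  then obtain e where "e dvd 2 * p * (p\<^sup>2 - 1)" "zsqrt_cong D (int p) (u ^ e) 1"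
  proof cases
    case 1
    then have "[x\<^sup>2 = 1] (mod int p)"
      by (auto simp: Legendre_def D_def cong_iff_dvd_diff cong_0_iff split: if_splits)
    have "u ^ (p * 2) = (u ^ p) ^ 2"
      by (rule power_mult)
    also have "zsqrt_cong D (int p) \<dots> ([:x, 0:] ^ 2)"
      using frobenius 1 by (intro cong_mod2_pow) simp
    also have "[:x, 0:] ^ 2 = [:x\<^sup>2, 0:]"
      by (simp add: poly_const_pow)
    also have "zsqrt_cong D (int p) \<dots> [:1, 0:]"
      unfolding zsqrt_cong_linear_iff using \<open>[x\<^sup>2 = 1] (mod int p)\<close> by simp
    finally show ?thesis
      by (intro that[of "p * 2"]) (simp_all add: pCons_one)
  next
    case 2
    then have "zsqrt_cong D (int p) (u ^ Suc (p - 1)) u"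
      using frobenius p(2) by (simp add: u_def)
    then have "zsqrt_cong D (int p) (u ^ (p - 1)) 1"
      by (rule cong_mod2_power_cancel[OF norm])
    then show ?thesis
      by (rule that[rotated]) (unfold p(1), intro dvd_mult dvd_triv_left)
  next
    case 3
    then have "zsqrt_cong D (int p) (u ^ p) ubar"
      using frobenius by (simp add: ubar_def)
    have "u ^ (p + 1) = u ^ p * u"
      by simp
    also have "zsqrt_cong D (int p) \<dots> (ubar * u)"
      by (rule cong_mod2_mult[OF \<open>zsqrt_cong D (int p) (u ^ p) ubar\<close> cong_mod2_refl])
    also have "ubar * u = u * ubar"
      by (rule mult.commute)
    also have "zsqrt_cong D (int p) \<dots> 1"
      by (rule norm)
    finally show ?thesis
      by (rule that[rotated]) (unfold p(1), intro dvd_mult dvd_triv_right)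
  qed
  then show ?thesis
    unfolding D_def u_def by (rule cong_mod2_pow_one_dvd[rotated])
qed

lemma zsqrt_cong_one_power_prime_power:
  assumes "zsqrt_cong D (int p) v 1"
  shows "zsqrt_cong D (int p ^ Suc j) (v ^ p ^ j) 1"
proof (induction j)
  case 0
  show ?case
    using assms by simp
next
  case (Suc j)
  have square: "[:int p ^ Suc (Suc j):] dvd [:int p ^ Suc j:]\<^sup>2"
    by (simp add: power2_eq_square le_imp_power_dvd flip: power_add)
  have "zsqrt_cong D (int p ^ Suc (Suc j)) ((v ^ p ^ j) ^ p) 1"
    by (rule cong_mod2_one_power[OF Suc.IH _ square]) (simp add: of_nat_poly)
  then show ?case
    by (simp only: power_mult[symmetric] power_Suc2)
qed

section \<open>Chebyshev polynomials\<close>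

text \<open>\<open>chebU_pred z m\<close> is \<open>U\<^sub>m\<^sub>-\<^sub>1(z)\<close>, with \<open>U\<close> the Chebyshev polynomials of the second kind.\<close>

fun chebU_pred :: "int \<Rightarrow> nat \<Rightarrow> int" where
  "chebU_pred z 0 = 0"
| "chebU_pred z (Suc 0) = 1"
| "chebU_pred z (Suc (Suc m)) = 2 * z * chebU_pred z (Suc m) - chebU_pred z m"

lemma zsqrt_cong_power_chebT:
  assumes root: "zsqrt_cong D M (v * v) ([:2 * z:] * v - 1)" and v: "zsqrt_cong D M v [:z, s:]"
  shows "zsqrt_cong D M (v ^ m) [:poly (chebT m) z, s * chebU_pred z m:]"
proof (induction m rule: chebT.induct)
  case 1
  show ?case
    by (simp add: one_pCons)
next
  case 2
  show ?case
    using v by simp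
next
  case (3 d)
  have "v ^ Suc (Suc d) = (v * v) * v ^ d"
    by (simp add: algebra_simps)
  also have "zsqrt_cong D M \<dots> (([:2 * z:] * v - 1) * v ^ d)"
    by (rule cong_mod2_mult[OF root cong_mod2_refl])
  also have "([:2 * z:] * v - 1) * v ^ d = [:2 * z:] * v ^ Suc d - v ^ d"
    by (simp add: algebra_simps)
  also have "zsqrt_cong D M \<dots>
      ([:2 * z:] * [:poly (chebT (Suc d)) z, s * chebU_pred z (Suc d):] - [:poly (chebT d) z, s * chebU_pred z d:])"
    by (intro cong_mod2_diff cong_mod2_mult cong_mod2_refl 3)
  also have "\<dots> = [:poly (chebT (Suc (Suc d))) z, s * chebU_pred z (Suc (Suc d)):]"
    by (simp add: algebra_simps)
  finally show ?case .
qed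

lemma zsqrt_power_chebT:
  fixes y :: int
  assumes "s\<^sup>2 = 1"
  shows "zsqrt_cong (y\<^sup>2 - 1) M ([:y, s:] ^ m) [:poly (chebT m) y, s * chebU_pred y m:]"
  using assms by (intro zsqrt_cong_power_chebT zsqrt_norm_one_square cong_mod2_refl) simp

lemma chebT_pell: "(poly (chebT m) y)\<^sup>2 - (y\<^sup>2 - 1) * (chebU_pred y m)\<^sup>2 = 1"
proof -
  define D where "D = y\<^sup>2 - 1"
  define z where "z = poly (chebT m) y"
  define s where "s = chebU_pred y m"
  have "zsqrt_cong D 0 [:z\<^sup>2 - D * s\<^sup>2:] ([:z, s:] * [:z, -s:])"
    by (rule cong_mod2_sym[OF zsqrt_cong_norm])
  also have "zsqrt_cong D 0 \<dots> ([:y, 1:] ^ m * [:y, -1:] ^ m)"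
    using zsqrt_power_chebT[of 1 y 0 m] zsqrt_power_chebT[of "-1" y 0 m]
    by (intro cong_mod2_sym[OF cong_mod2_mult]) (simp_all add: D_def z_def s_def)
  also have "[:y, 1:] ^ m * [:y, -1:] ^ m = ([:y, 1:] * [:y, -1:]) ^ m"
    by (rule power_mult_distrib[symmetric])
  also have "zsqrt_cong D 0 \<dots> (1 ^ m)"
    using zsqrt_cong_norm[of D 0 y 1] by (intro cong_mod2_pow) (simp add: D_def pCons_one)
  finally have "zsqrt_cong D 0 [:z\<^sup>2 - D * s\<^sup>2:] [:1:]"
    by (simp add: pCons_one)
  then show ?thesis
    using zsqrt_cong_linear_iff[of D 0 "z\<^sup>2 - D * s\<^sup>2" 0 1 0] by (simp add: D_def z_def s_def)
qed

lemma chebT_comp: "poly (chebT a) (poly (chebT b) y) = poly (chebT (a * b)) y"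
proof -
  define D where "D = y\<^sup>2 - 1"
  define z where "z = poly (chebT b) y"
  define s where "s = chebU_pred y b"
  have ub: "zsqrt_cong D 0 ([:y, 1:] ^ b) [:z, s:]"
    using zsqrt_power_chebT[of 1 y 0 b] by (simp add: D_def z_def s_def)
  have "[:y, 1:] ^ (a * b) = ([:y, 1:] ^ b) ^ a"
    by (metis power_mult mult.commute)
  also have "zsqrt_cong D 0 \<dots> ([:z, s:] ^ a)"
    by (rule cong_mod2_pow[OF ub])
  also have "zsqrt_cong D 0 \<dots> [:poly (chebT a) z, s * chebU_pred z a:]"
    using chebT_pell[of b y]
    by (intro zsqrt_cong_power_chebT zsqrt_norm_one_square cong_mod2_refl) (simp add: D_def z_def s_def)
  finally have "zsqrt_cong D 0 [:poly (chebT (a * b)) y, chebU_pred y (a * b):]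
      [:poly (chebT a) z, s * chebU_pred z a:]"
    using zsqrt_power_chebT[of 1 y 0 "a * b"] cong_mod2_sym cong_mod2_trans unfolding D_def by fastforce
  then show ?thesis
    unfolding zsqrt_cong_linear_iff z_def by simp
qed

lemma funpow_chebT: "(poly (chebT n) ^^ N) y = poly (chebT (n ^ N)) y"
  by (induction N arbitrary: y) (simp_all add: chebT_comp)

lemma chebT_at_1: "poly (chebT m) 1 = 1"
  by (induction m rule: chebT.induct) simp_all

lemma chebT_orbit_periodic:
  assumes "prime p" "odd p" "coprime n p" "coprime n (p\<^sup>2 - 1)"
  shows "\<exists>N>0. [(poly (chebT n) ^^ N) x = x] (mod int p ^ j)"
proof -
  define E where "E = 2 * p * (p\<^sup>2 - 1) * p ^ j"
  have p: "2 \<le> p"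
    using assms(1) by (rule prime_ge_2_nat)
  have "2 dvd p\<^sup>2 - 1"
    using assms(2) by simp
  then have "coprime n 2"
    using coprime_divisors[OF dvd_refl _ assms(4)] by blast
  then have "coprime n E"
    using assms(3,4) by (simp add: E_def)
  define N where "N = totient E"
  have "[n ^ N = 1] (mod E)"
    unfolding N_def using \<open>coprime n E\<close> by (rule euler_theorem)
  have "0 < N"
    using p mult_le_mono[OF p p] by (simp add: N_def E_def power2_eq_square)
  have "0 < n ^ N"
    using assms(3) p by (cases "n = 0") auto
  have "zsqrt_cong (x\<^sup>2 - 1) (int p ^ Suc j) ([:x, 1:] ^ E) 1"
    using zsqrt_cong_one_power_prime_power[OF zsqrt_unit_order_mod_prime[OF assms(1,2)]]
    by (simp add: E_def power_mult)
  then have "zsqrt_cong (x\<^sup>2 - 1) (int p ^ Suc j) ([:x, 1:] ^ (n ^ N)) [:x, 1:]"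
    using \<open>[n ^ N = 1] (mod E)\<close> \<open>0 < n ^ N\<close> by (rule cong_mod2_power_cong_1)
  moreover have "zsqrt_cong (x\<^sup>2 - 1) (int p ^ Suc j) ([:x, 1:] ^ (n ^ N))
      [:poly (chebT (n ^ N)) x, chebU_pred x (n ^ N):]"
    using zsqrt_power_chebT[of 1 x _ "n ^ N"] by simp
  ultimately have "[poly (chebT (n ^ N)) x = x] (mod int p ^ Suc j)"
    by (meson cong_mod2_sym cong_mod2_trans zsqrt_cong_linear_iff)
  then have "[(poly (chebT n) ^^ N) x = x] (mod int p ^ j)"
    unfolding funpow_chebT by (rule cong_dvd_modulus) simp
  with \<open>0 < N\<close> show ?thesis
    by blast
qed

theorem corollary1:
  fixes p n w :: nat and x :: int
  assumes "prime p" and "p > 3" and "n > 1"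
    and "gcd n p = 1" and "gcd n (p^2 - 1) = 1"
    and "x \<ge> 0" and "w > 0"
    and "cheb_period n x (int p ^ w) \<ge> p^2"
  shows "\<forall>k\<ge>w. cheb_period n x (int p ^ k) = cheb_period n x (int p ^ w) * p ^ (k - w)"
proof (intro allI impI)
  fix k assume "w \<le> k"
  have "odd p"
    using assms(2) by (intro prime_odd_nat[OF assms(1)]) simp
  have "coprime n p" "coprime n (p\<^sup>2 - 1)"
    using assms(4,5) by (simp_all only: coprime_iff_gcd_eq_1)
  interpret prime_power_orbit "chebT n" x p
  proof
    show "prime p" "odd p"
      by fact+
    show "\<exists>N>0. [(poly (chebT n) ^^ N) x = x] (mod int p ^ j)" for j
      by (rule chebT_orbit_periodic) fact+
  qed
  have "1 \<le> w" "p\<^sup>2 \<le> period w"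
    using assms(7,8) by (simp_all add: period_def cheb_period_eq_orbit_period)
  then have "period k = period w * p ^ (k - w)"
    using period_growth[OF chebT_at_1 _ _ \<open>w \<le> k\<close>] by blast
  then show "cheb_period n x (int p ^ k) = cheb_period n x (int p ^ w) * p ^ (k - w)"
    by (simp only: period_def cheb_period_eq_orbit_period)
qed

end
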